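(* Let $P\subseteq\mathbb{R}^2$ be a convex polygon such that $\tau P=P^{\circ}$ and $P$ has exactly $6$ vertices. Then the area of $P$ equals $3$.
   Context: $\tau:\mathbb{R}^2\to\mathbb{R}^2$ denotes the $90^\circ$ counterclockwise rotation. The polar of $P$ is $P^{\circ}=\{x\in\mathbb{R}^2: y^\top x\le 1\text{ for all }y\in P\}$. *)

theory Defs
  imports "HOL-Analysis.Analysis"
begin

definition rot90 :: "real^2 \<Rightarrow> real^2" where
  "rot90 x = vector [- (x $ 2), x $ 1]"

definition polar :: "(real^2) set \<Rightarrow> (real^2) set" where
  "polar P = {x. \<forall>y\<in>P. y \<bullet> x \<le> 1}"

end

theory Submission
  imports Defs
begin

text \<open>Write det2 y z for the determinant with columns y and z, so that z \<bullet> rot90 y = det2 y z.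
  The hypothesis rot90 ` P = polar P says that det2 y z \<le> 1 for all y, z \<in> P and that every
  p with det2 p z \<le> 1 for all z \<in> P lies in P. Hence P is centrally symmetric and is cut
  out by the half-planes det2 p w \<le> 1, w a vertex. A vertex x of such a polygon lies on two
  non-parallel constraint lines, i.e. det2 x w = 1 for two non-parallel vertices w. For a hexagon
  with vertices \<plusminus>x, \<plusminus>y, \<plusminus>z in counterclockwise order this forces
  det2 x y = det2 x z = det2 y z = 1, hence z = y - x, and P is the image of the hexagon
  |c1|, |c2|, |c1 + c2| \<le> 1, of area 3, under the unimodular map c \<mapsto> c1 x + c2 y.\<close>

lemma uminus_neq_self:
  fixes x :: "'a::real_vector"
  shows "x \<noteq> 0 \<Longrightarrow> -x \<noteq> x"
  by (metis ab_left_minus scaleR_2 scaleR_eq_0_iff zero_neq_numeral)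

lemma extreme_point_of_uminus:
  fixes x :: "'a::real_vector"
  assumes "x extreme_point_of S" "\<And>y. y \<in> S \<Longrightarrow> -y \<in> S"
  shows "-x extreme_point_of S"
proof -
  have "y \<in> open_segment a b" if "-y \<in> open_segment (-a) (-b)" for y a b :: 'a
  proof -
    have "-y \<in> uminus ` open_segment a b"
      using that open_segment_linear_image[OF linear_uminus, of a b] by (simp add: inj_def)
    then show ?thesis by auto
  qed
  with assms show ?thesis
    unfolding extreme_point_of_def by (metis minus_minus)
qed

lemma extreme_point_of_polyhedron_active_constraint:
  fixes x d :: "'a::real_vector" and f :: "'i \<Rightarrow> 'a \<Rightarrow> real"
  assumes "finite I" "\<And>i. i \<in> I \<Longrightarrow> linear (f i)"
    and "x extreme_point_of {p. \<forall>i\<in>I. f i p \<le> 1}" and "d \<noteq> 0"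
  shows "\<exists>i\<in>I. f i x = 1 \<and> f i d \<noteq> 0"
proof (rule ccontr)
  assume "\<not> ?thesis"
  then have flat: "f i d = 0" if "i \<in> I" "f i x = 1" for i
    using that by blast
  have x: "f i x \<le> 1" if "i \<in> I" for i
    using assms(3) that by (auto simp: extreme_point_of_def)
  have "\<forall>\<^sub>F e in at_right 0. \<forall>i\<in>I. f i x < 1 \<longrightarrow> e * \<bar>f i d\<bar> < 1 - f i x"
  proof (intro eventually_ball_finite[OF assms(1)] ballI)
    fix i
    have "((\<lambda>e. e * \<bar>f i d\<bar>) \<longlongrightarrow> 0) (at_right 0)"
      by (auto intro!: tendsto_eq_intros)
    from order_tendstoD(2)[OF this, of "1 - f i x"]
    show "\<forall>\<^sub>F e in at_right 0. f i x < 1 \<longrightarrow> e * \<bar>f i d\<bar> < 1 - f i x"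
      by (cases "f i x < 1") (auto elim: eventually_mono)
  qed
  with eventually_at_right_less
  have "\<forall>\<^sub>F e in at_right 0. 0 < e \<and> (\<forall>i\<in>I. f i x < 1 \<longrightarrow> e * \<bar>f i d\<bar> < 1 - f i x)"
    by (rule eventually_conj)
  then obtain e where "e > 0"
    and slack: "\<And>i. i \<in> I \<Longrightarrow> f i x < 1 \<Longrightarrow> e * \<bar>f i d\<bar> < 1 - f i x"
    using eventually_happens'[OF trivial_limit_at_right_real] by blast
  \<comment> \<open>Moving along d does not change the active constraints and, for small e, keeps the others.\<close>
  have "x + s *\<^sub>R d \<in> {p. \<forall>i\<in>I. f i p \<le> 1}" if "\<bar>s\<bar> = e" for s
  proof (intro CollectI ballI)
    fix i assume "i \<in> I"
    have "f i (x + s *\<^sub>R d) = f i x + s * f i d"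
      using assms(2)[OF \<open>i \<in> I\<close>] by (simp add: linear_add linear_scale)
    moreover have "s * f i d \<le> e * \<bar>f i d\<bar>"
      using that by (metis abs_ge_self abs_mult)
    ultimately show "f i (x + s *\<^sub>R d) \<le> 1"
      using x[OF \<open>i \<in> I\<close>] flat[OF \<open>i \<in> I\<close>] slack[OF \<open>i \<in> I\<close>]
      by (cases "f i x = 1") auto
  qed
  from this[of "-e"] this[of e] \<open>e > 0\<close>
  have "x - e *\<^sub>R d \<in> {p. \<forall>i\<in>I. f i p \<le> 1}" "x + e *\<^sub>R d \<in> {p. \<forall>i\<in>I. f i p \<le> 1}"
    by simp_all
  moreover have "x \<in> open_segment (x - e *\<^sub>R d) (x + e *\<^sub>R d)"
    using midpoint_in_open_segment[of "x - e *\<^sub>R d" "x + e *\<^sub>R d"] \<open>e > 0\<close> assms(4)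
      uminus_neq_self[of "e *\<^sub>R d"]
    by (simp add: midpoint_def)
  ultimately show False
    using assms(3) by (auto simp: extreme_point_of_def)
qed

definition det2 :: "real^2 \<Rightarrow> real^2 \<Rightarrow> real" where
  "det2 y z = y$1 * z$2 - y$2 * z$1"

lemma det2_simps [simp]:
  "det2 x x = 0" "det2 0 x = 0" "det2 x 0 = 0"
  "det2 (-x) y = - det2 x y" "det2 x (-y) = - det2 x y"
  "det2 (x + y) z = det2 x z + det2 y z" "det2 (x - y) z = det2 x z - det2 y z"
  "det2 z (x + y) = det2 z x + det2 z y" "det2 z (x - y) = det2 z x - det2 z y"
  "det2 (c *\<^sub>R x) y = c * det2 x y" "det2 x (c *\<^sub>R y) = c * det2 x y"
  by (simp_all add: det2_def algebra_simps)

lemma det2_swap: "det2 y x = - det2 x y"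
  by (simp add: det2_def)

lemma inner_rot90: "z \<bullet> rot90 y = det2 y z"
  by (simp add: inner_vec_def sum_2 rot90_def det2_def)

lemma inj_rot90: "inj rot90"
  by (rule injI) (simp add: rot90_def vec_eq_iff forall_2)

lemma linear_det2_left: "linear (\<lambda>p. det2 p w)"
  by (rule linearI) (simp_all add: det2_def algebra_simps)

lemma convex_det2_le: "convex {z. det2 a z \<le> c}"
  using convex_halfspace_le[of "rot90 a" c] by (simp add: inner_commute inner_rot90)

lemma det2_cramer: "det2 x y *\<^sub>R p = det2 p y *\<^sub>R x + det2 x p *\<^sub>R y"
  by (simp add: vec_eq_iff forall_2 det2_def algebra_simps)

definition lincomb2 :: "real^2 \<Rightarrow> real^2 \<Rightarrow> real^2 \<Rightarrow> real^2" where
  "lincomb2 u v c = c$1 *\<^sub>R u + c$2 *\<^sub>R v"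

lemma linear_lincomb2: "linear (lincomb2 u v)"
  by (rule linearI) (simp_all add: lincomb2_def algebra_simps)

lemma det_matrix_lincomb2: "det (matrix (lincomb2 u v)) = det2 u v"
  by (simp add: det_2 matrix_def axis_def lincomb2_def det2_def)

lemma det2_lincomb2: "det2 (lincomb2 u v c) w = c$1 * det2 u w + c$2 * det2 v w"
  by (simp add: lincomb2_def)

lemma lincomb2_cramer:
  assumes "det2 u v = 1"
  shows "lincomb2 u v (vector [det2 p v, det2 u p]) = p"
  using det2_cramer[of u v p] assms by (simp add: lincomb2_def)

lemma mem_lincomb2_image:
  assumes "det2 u v = 1"
  shows "p \<in> lincomb2 u v ` S \<longleftrightarrow> vector [det2 p v, det2 u p] \<in> S"
proof
  assume "p \<in> lincomb2 u v ` S"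
  then obtain c where "c \<in> S" "p = lincomb2 u v c" by blast
  moreover have "vector [det2 (lincomb2 u v c) v, det2 u (lincomb2 u v c)] = c"
    using assms det2_swap[of v u] by (simp add: det2_lincomb2 lincomb2_def vec_eq_iff forall_2)
  ultimately show "vector [det2 p v, det2 u p] \<in> S" by simp
qed (metis image_eqI lincomb2_cramer[OF assms])

lemma measure_unit_square: "measure lebesgue (cbox (0::real^2) 1) = 1"
  by (simp add: content_cbox_if_cart interval_eq_empty_cart)

lemma measure_parallelogram:
  shows "lincomb2 u v ` cbox 0 1 \<in> lmeasurable"
    and "measure lebesgue (lincomb2 u v ` cbox 0 1) = \<bar>det2 u v\<bar>"
  using measurable_linear_image[OF linear_lincomb2] measure_linear_image[OF linear_lincomb2]
  by (simp_all add: det_matrix_lincomb2 measure_unit_square)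

definition std_hexagon :: "(real^2) set" where
  "std_hexagon = {c. \<bar>c$1\<bar> \<le> 1 \<and> \<bar>c$2\<bar> \<le> 1 \<and> \<bar>c$1 + c$2\<bar> \<le> 1}"

lemma measure_std_hexagon:
  shows "std_hexagon \<in> lmeasurable" and "measure lebesgue std_hexagon = 3"
proof -
  let ?R = "\<lambda>u v. lincomb2 u v ` cbox 0 1"
  \<comment> \<open>The rhombi spanned by a, b and by b, c and by c, a (where a + b + c = 0) tile the hexagon.\<close>
  define a b c :: "real^2" where "a = vector [1, 0]" "b = vector [-1, 1]" "c = vector [0, -1]"
  have "det2 a b = 1" "det2 b c = 1" "det2 c a = 1"
    by (simp_all add: a_b_c_def det2_def)
  then have mem: "p \<in> ?R a b \<longleftrightarrow> 0 \<le> p$2 \<and> p$2 \<le> 1 \<and> 0 \<le> p$1 + p$2 \<and> p$1 + p$2 \<le> 1"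
    "p \<in> ?R b c \<longleftrightarrow> -1 \<le> p$1 \<and> p$1 \<le> 0 \<and> -1 \<le> p$1 + p$2 \<and> p$1 + p$2 \<le> 0"
    "p \<in> ?R c a \<longleftrightarrow> 0 \<le> p$1 \<and> p$1 \<le> 1 \<and> -1 \<le> p$2 \<and> p$2 \<le> 0" for p
    by (auto simp: mem_lincomb2_image mem_box_cart forall_2 a_b_c_def det2_def)
  have hexagon: "?R a b \<union> ?R b c \<union> ?R c a = std_hexagon"
    unfolding set_eq_iff Un_iff mem std_hexagon_def mem_Collect_eq by arith
  then show "std_hexagon \<in> lmeasurable"
    by (metis fmeasurable.Un measure_parallelogram(1))
  have ab_bc: "negligible (?R a b \<inter> ?R b c)"
    by (rule negligible_subset[OF negligible_hyperplane[of "vector [1, 1]" 0]])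
      (unfold subset_iff Int_iff mem, auto simp: inner_vec_def sum_2 vec_eq_iff intro: exI[of _ 1])
  have ab_ca: "negligible (?R a b \<inter> ?R c a)"
    by (rule negligible_subset[OF negligible_standard_hyperplane_cart[of 2]])
      (unfold subset_iff Int_iff mem, auto)
  have bc_ca: "negligible (?R b c \<inter> ?R c a)"
    by (rule negligible_subset[OF negligible_standard_hyperplane_cart[of 1]])
      (unfold subset_iff Int_iff mem, auto)
  have "measure lebesgue std_hexagon = \<bar>det2 a b\<bar> + \<bar>det2 b c\<bar> + \<bar>det2 c a\<bar>"
    using measure_Un3_negligible[OF measure_parallelogram(1) measure_parallelogram(1)
        measure_parallelogram(1) ab_bc ab_ca bc_ca hexagon]
    by (simp add: measure_parallelogram(2))
  with \<open>det2 a b = 1\<close> \<open>det2 b c = 1\<close> \<open>det2 c a = 1\<close>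
  show "measure lebesgue std_hexagon = 3" by simp
qed

lemma rot90_polar_det2_le:
  assumes "rot90 ` P = polar P" "y \<in> P" "z \<in> P"
  shows "det2 y z \<le> 1"
proof -
  have "rot90 y \<in> polar P"
    using assms(1,2) by blast
  with assms(3) show ?thesis
    by (auto simp: polar_def inner_rot90)
qed

lemma rot90_polar_mem_iff:
  assumes "rot90 ` P = polar P"
  shows "p \<in> P \<longleftrightarrow> (\<forall>z\<in>P. det2 p z \<le> 1)"
proof
  assume "\<forall>z\<in>P. det2 p z \<le> 1"
  then have "rot90 p \<in> rot90 ` P"
    unfolding assms by (simp add: polar_def inner_rot90)
  then show "p \<in> P"
    using inj_rot90 by (auto dest: injD)
qed (use assms rot90_polar_det2_le in blast)

lemma rot90_polar_uminus:
  assumes "rot90 ` P = polar P" "y \<in> P"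
  shows "-y \<in> P"
  using rot90_polar_det2_le[OF assms(1) _ assms(2)] det2_swap[of y]
  by (subst rot90_polar_mem_iff[OF assms(1)]) simp

lemma rot90_polar_eq_det2_halfplanes:
  assumes "polytope P" "rot90 ` P = polar P"
  shows "P = {p. \<forall>w\<in>{v. v extreme_point_of P}. det2 p w \<le> 1}"
proof -
  let ?V = "{v. v extreme_point_of P}"
  have hull: "P = convex hull ?V"
    using assms(1) by (simp add: Krein_Milman_Minkowski polytope_imp_compact polytope_imp_convex)
  have "p \<in> P" if "\<forall>w\<in>?V. det2 p w \<le> 1" for p
  proof -
    have "P \<subseteq> {z. det2 p z \<le> 1}"
      by (subst hull, rule hull_minimal) (use that convex_det2_le in auto)
    then show ?thesis
      using rot90_polar_mem_iff[OF assms(2)] by blast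
  qed
  moreover have "?V \<subseteq> P"
    by (auto simp: extreme_point_of_def)
  ultimately show ?thesis
    using rot90_polar_det2_le[OF assms(2)] by blast
qed

lemma rot90_polar_vertex_neighbours:
  assumes "polytope P" "rot90 ` P = polar P" "x extreme_point_of P"
  obtains w1 w2 where "w1 extreme_point_of P" "w2 extreme_point_of P"
    "det2 x w1 = 1" "det2 x w2 = 1" "det2 w1 w2 \<noteq> 0"
proof -
  let ?V = "{v. v extreme_point_of P}"
  have fin: "finite ?V"
    using assms(1) by (simp add: finite_polyhedron_extreme_points polytope_imp_polyhedron)
  have active: "\<exists>w\<in>?V. det2 x w = 1 \<and> det2 d w \<noteq> 0" if "d \<noteq> 0" for d
    using extreme_point_of_polyhedron_active_constraint[OF fin linear_det2_left _ that]
      assms(3) rot90_polar_eq_det2_halfplanes[OF assms(1,2)] by simp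
  obtain w1 where w1: "w1 \<in> ?V" "det2 x w1 = 1"
    using active[of 1] by (auto simp: vec_eq_iff)
  moreover have "w1 \<noteq> 0"
    using w1(2) by auto
  ultimately show ?thesis
    using active[of w1] that by auto
qed

lemma rot90_polar_hexagon_vertices:
  assumes "polytope P" "rot90 ` P = polar P" "card {v. v extreme_point_of P} = 6"
  obtains x y where "{v. v extreme_point_of P} = {x, -x, y, -y, y - x, x - y}" "det2 x y = 1"
proof -
  let ?V = "{v. v extreme_point_of P}"
  have sym: "-v \<in> ?V" if "v \<in> ?V" for v
    using that extreme_point_of_uminus rot90_polar_uminus[OF assms(2)] by blast
  obtain x where "x \<in> ?V"
    using assms(3) by fastforce
  obtain y z where yz: "y \<in> ?V" "z \<in> ?V" "det2 x y = 1" "det2 x z = 1" "det2 y z > 0"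
  proof -
    obtain w1 w2 where "w1 \<in> ?V" "w2 \<in> ?V" "det2 x w1 = 1" "det2 x w2 = 1" "det2 w1 w2 \<noteq> 0"
      using rot90_polar_vertex_neighbours[OF assms(1,2)] \<open>x \<in> ?V\<close> by blast
    then show ?thesis
      using that[of w1 w2] that[of w2 w1] det2_swap[of w1 w2] by (cases "det2 w1 w2 > 0") auto
  qed
  have "x \<noteq> 0" "y \<noteq> 0" "z \<noteq> 0"
    using yz by auto
  then have "-x \<noteq> x" "-y \<noteq> y" "-z \<noteq> z"
    by (simp_all add: uminus_neq_self)
  moreover have "y \<noteq> x" "y \<noteq> -x" "z \<noteq> x" "z \<noteq> -x" "z \<noteq> y" "z \<noteq> -y"
    using yz by auto
  ultimately have "card {x, -x, y, -y, z, -z} = card ?V"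
    unfolding assms(3) by (auto simp: card_insert_if)
  moreover have "finite ?V"
    using assms(3) card.infinite by force
  ultimately have V: "?V = {x, -x, y, -y, z, -z}"
    using sym \<open>x \<in> ?V\<close> yz(1,2) by (intro card_subset_eq[symmetric]) auto
  have "det2 y z = 1"
  proof (rule ccontr)
    assume "det2 y z \<noteq> 1"
    obtain u1 u2 where "u1 \<in> ?V" "u2 \<in> ?V" "det2 y u1 = 1" "det2 y u2 = 1" "det2 u1 u2 \<noteq> 0"
      using rot90_polar_vertex_neighbours[OF assms(1,2)] yz(1) by blast
    \<comment> \<open>Of \<plusminus>x, \<plusminus>y, \<plusminus>z only -x and z could lie on the line det2 y w = 1.\<close>
    moreover have "u = -x" if "u \<in> ?V" "det2 y u = 1" for u
      using that yz \<open>det2 y z \<noteq> 1\<close> det2_swap[of x y] unfolding V by auto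
    ultimately show False
      by (metis det2_simps(1))
  qed
  have "z = y - x"
    using det2_cramer[of x y z] yz det2_swap[of y z] \<open>det2 y z = 1\<close> by simp
  with V yz(3) that show ?thesis
    by simp
qed

lemma rot90_polar_eq_lincomb2_std_hexagon:
  assumes "polytope P" "rot90 ` P = polar P"
    and "{v. v extreme_point_of P} = {x, -x, y, -y, y - x, x - y}" "det2 x y = 1"
  shows "P = lincomb2 x y ` std_hexagon"
proof -
  have "p \<in> P \<longleftrightarrow> p \<in> lincomb2 x y ` std_hexagon" for p
    using det2_swap[of p x]
    by (subst rot90_polar_eq_det2_halfplanes[OF assms(1,2)])
      (auto simp: assms(3) mem_lincomb2_image[OF assms(4)] std_hexagon_def abs_le_iff)
  then show ?thesis
    by blast
qed

theorem proposition7: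
  fixes P :: "(real^2) set"
  assumes "polytope P"
    and "rot90 ` P = polar P"
    and "card {v. v extreme_point_of P} = 6"
  shows "measure lebesgue P = 3"
proof -
  obtain x y where "{v. v extreme_point_of P} = {x, -x, y, -y, y - x, x - y}" "det2 x y = 1"
    using rot90_polar_hexagon_vertices[OF assms] .
  then have "P = lincomb2 x y ` std_hexagon"
    by (rule rot90_polar_eq_lincomb2_std_hexagon[OF assms(1,2)])
  then show ?thesis
    using measure_linear_image[OF linear_lincomb2 measure_std_hexagon(1), of x y]
    by (simp add: det_matrix_lincomb2 \<open>det2 x y = 1\<close> measure_std_hexagon(2))
qed

end
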